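(* Let $G=(V,W,E)$ be a bipartite graph with parts $V$ and $W$ such that (1) $|N(v)|=3$ for all $v\in V$, (2) $G$ is odd, (3) $G$ is rigid, and (4) there are no distinct $w_1,w_2\in W$ with $N_G^{2}(w_1)=N_G^{2}(w_2)$. Then the graph $R(G)$ is rigid.
   Context: All graphs are finite, simple and undirected; $N(v)$ denotes the neighbourhood of $v$. A graph is rigid if its only automorphism is the identity. A bipartite graph $G=(V,W,E)$ in which every vertex of $V$ has degree $3$ is called odd if for every nonempty $X\subseteq W$ there is some $v\in V$ such that $|X\cap N(v)|$ is odd. The second neighbourhood of a vertex $v$ is $N_G^{2}(v)=\{u\in V(G): u\neq v \text{ and there is } w \text{ with } \{v,w\},\{w,u\}\in E(G)\}$. The graph $R(G)$ is defined as follows: for each $w\in W$ it has two vertices $a(w),b(w)$; for each $v\in V$, with its three neighbours listed in a fixed order $w_1,w_2,w_3$, it has four vertices $m_x(v)$, $x=(x_1,x_2,x_3)\in\{0,1\}^3$ with an even number of ones, where $m_x(v)$ is adjacent to $a(w_j)$ if $x_j=0$ and to $b(w_j)$ if $x_j=1$, for $j=1,2,3$; there are no other edges. *)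

theory Defs
  imports Main
begin

definition automorphism :: "'a set \<Rightarrow> ('a \<Rightarrow> 'a \<Rightarrow> bool) \<Rightarrow> ('a \<Rightarrow> 'a) \<Rightarrow> bool" where
  "automorphism X Adj f \<longleftrightarrow>
     bij_betw f X X \<and> (\<forall>x\<in>X. \<forall>y\<in>X. Adj (f x) (f y) \<longleftrightarrow> Adj x y)"

definition rigid :: "'a set \<Rightarrow> ('a \<Rightarrow> 'a \<Rightarrow> bool) \<Rightarrow> bool" where
  "rigid X Adj \<longleftrightarrow> (\<forall>f. automorphism X Adj f \<longrightarrow> (\<forall>x\<in>X. f x = x))"

definition second_nbhd :: "'a set \<Rightarrow> ('a \<Rightarrow> 'a \<Rightarrow> bool) \<Rightarrow> 'a \<Rightarrow> 'a set" where
  "second_nbhd X Adj v = {u\<in>X. u \<noteq> v \<and> (\<exists>w\<in>X. Adj v w \<and> Adj w u)}"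

definition bip_verts :: "'v set \<Rightarrow> 'w set \<Rightarrow> ('v + 'w) set" where
  "bip_verts V W = Inl ` V \<union> Inr ` W"

fun bip_adj :: "('v \<times> 'w) set \<Rightarrow> ('v + 'w) \<Rightarrow> ('v + 'w) \<Rightarrow> bool" where
  "bip_adj E (Inl v) (Inr w) = ((v, w) \<in> E)"
| "bip_adj E (Inr w) (Inl v) = ((v, w) \<in> E)"
| "bip_adj E _ _ = False"

definition NV :: "('v \<times> 'w) set \<Rightarrow> 'v \<Rightarrow> 'w set" where
  "NV E v = {w. (v, w) \<in> E}"

definition odd_bip :: "'v set \<Rightarrow> 'w set \<Rightarrow> ('v \<times> 'w) set \<Rightarrow> bool" where
  "odd_bip V W E \<longleftrightarrow>
     (\<forall>X. X \<subseteq> W \<and> X \<noteq> {} \<longrightarrow> (\<exists>v\<in>V. odd (card (X \<inter> NV E v))))"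

datatype ('v, 'w) rvert = RA 'w | RB 'w | RM 'v "bool \<times> bool \<times> bool"

fun comp :: "bool \<times> bool \<times> bool \<Rightarrow> nat \<Rightarrow> bool" where
  "comp (a, b, c) j = (if j = 1 then a else if j = 2 then b else c)"

definition even_vec :: "bool \<times> bool \<times> bool \<Rightarrow> bool" where
  "even_vec x \<longleftrightarrow> even (card {j\<in>{1,2,3::nat}. comp x j})"

definition R_verts :: "'v set \<Rightarrow> 'w set \<Rightarrow> ('v, 'w) rvert set" where
  "R_verts V W = RA ` W \<union> RB ` W \<union> {RM v x | v x. v \<in> V \<and> even_vec x}"

text \<open>ord v j (j = 1,2,3) is the fixed ordering of the neighbours of v.\<close>
fun R_edge :: "('v \<Rightarrow> nat \<Rightarrow> 'w) \<Rightarrow> ('v, 'w) rvert \<Rightarrow> ('v, 'w) rvert \<Rightarrow> bool" where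
  "R_edge ord (RM v x) (RA w) = (\<exists>j\<in>{1,2,3}. ord v j = w \<and> \<not> comp x j)"
| "R_edge ord (RM v x) (RB w) = (\<exists>j\<in>{1,2,3}. ord v j = w \<and> comp x j)"
| "R_edge ord _ _ = False"

definition R_adj :: "('v \<Rightarrow> nat \<Rightarrow> 'w) \<Rightarrow> ('v, 'w) rvert \<Rightarrow> ('v, 'w) rvert \<Rightarrow> bool" where
  "R_adj ord p q \<longleftrightarrow> R_edge ord p q \<or> R_edge ord q p"

end

theory Submission
  imports Defs "HOL-Combinatorics.Transposition"
begin

text \<open>In R(G) every m_x(v) has degree 3 and every a(w), b(w) has even degree, so an
  automorphism f of R(G) preserves both kinds of vertices. Moreover a(w) and b(w) have the same
  second neighbourhood, namely the a- and b-copies of the second neighbourhood of w in G, so by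
  hypothesis (4) f maps {a(w), b(w)} onto {a(\<sigma> w), b(\<sigma> w)} for a permutation \<sigma> of W.
  Together with the permutation \<tau> of V read off from the images of the m-vertices, \<sigma> is an
  automorphism of G, hence trivial by rigidity. So f swaps a(w) and b(w) exactly for w in some
  set X and sends m_0(v) to m_y(v), y the indicator of X on N(v). As y has an even number of
  ones, X meets every N(v) evenly, and oddness of G forces X = {}, i.e. f is the identity.\<close>

lemma automorphism_in:
  "automorphism X A f \<Longrightarrow> x \<in> X \<Longrightarrow> f x \<in> X"
  by (auto simp: automorphism_def bij_betw_def)

lemma automorphism_image:
  "automorphism X A f \<Longrightarrow> f ` X = X"
  by (simp add: automorphism_def bij_betw_def)

lemma automorphism_inj_iff:
  "automorphism X A f \<Longrightarrow> x \<in> X \<Longrightarrow> y \<in> X \<Longrightarrow> f x = f y \<longleftrightarrow> x = y"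
  by (auto simp: automorphism_def bij_betw_def inj_on_def)

lemma automorphism_adj_iff:
  "automorphism X A f \<Longrightarrow> x \<in> X \<Longrightarrow> y \<in> X \<Longrightarrow> A (f x) (f y) \<longleftrightarrow> A x y"
  by (simp add: automorphism_def)

lemma automorphism_neighbours:
  assumes "automorphism X A f" "u \<in> X"
  shows "{y\<in>X. A (f u) y} = f ` {y\<in>X. A u y}"
proof -
  have "{y\<in>X. A (f u) y} = {y\<in>f ` X. A (f u) y}"
    using automorphism_image[OF assms(1)] by simp
  also have "\<dots> = f ` {y\<in>X. A u y}"
    using automorphism_adj_iff[OF assms] by (auto simp: Compr_image_eq)
  finally show ?thesis .
qed

lemma automorphism_degree:
  assumes "automorphism X A f" "u \<in> X"
  shows "card {y\<in>X. A (f u) y} = card {y\<in>X. A u y}"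
proof -
  have "inj_on f {y\<in>X. A u y}"
    using assms(1) by (auto simp: automorphism_def bij_betw_def intro: inj_on_subset)
  then show ?thesis by (simp add: automorphism_neighbours[OF assms] card_image)
qed

lemma automorphism_second_nbhd:
  assumes "automorphism X A f" "u \<in> X"
  shows "second_nbhd X A (f u) = f ` second_nbhd X A u"
proof -
  have "second_nbhd X A (f u) = {z\<in>f ` X. z \<noteq> f u \<and> (\<exists>w\<in>f ` X. A (f u) w \<and> A w z)}"
    using automorphism_image[OF assms(1)] by (simp add: second_nbhd_def)
  also have "\<dots> = f ` {z\<in>X. f z \<noteq> f u \<and> (\<exists>w\<in>X. A (f u) (f w) \<and> A (f w) (f z))}"
    by (simp add: Compr_image_eq)
  also have "\<dots> = f ` second_nbhd X A u"
    using assms automorphism_adj_iff[OF assms(1)] automorphism_inj_iff[OF assms(1)]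
    unfolding second_nbhd_def by (intro arg_cong[where f = "image f"]) auto
  finally show ?thesis .
qed

lemma second_nbhd_iff:
  "u \<in> second_nbhd X A v \<longleftrightarrow> u \<in> X \<and> u \<noteq> v \<and> (\<exists>w\<in>X. A v w \<and> A w u)"
  by (simp add: second_nbhd_def)

lemma rigid_twins_eq:
  assumes "rigid X A" and sym: "\<forall>p\<in>X. \<forall>q\<in>X. A p q \<longleftrightarrow> A q p"
    and "x \<in> X" "y \<in> X" and twins: "\<forall>z\<in>X. A x z \<longleftrightarrow> A y z"
  shows "x = y"
proof -
  let ?h = "transpose x y"
  have h_in: "?h p \<in> X" if "p \<in> X" for p
    using that \<open>x \<in> X\<close> \<open>y \<in> X\<close> by (simp add: transpose_def)
  have h_twin: "A (?h p) z \<longleftrightarrow> A p z" if "z \<in> X" for p z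
    using twins that by (simp add: transpose_def)
  have "A (?h p) (?h q) \<longleftrightarrow> A p q" if "p \<in> X" "q \<in> X" for p q
  proof -
    have "A (?h p) (?h q) \<longleftrightarrow> A p (?h q)" using h_twin h_in \<open>q \<in> X\<close> by blast
    also have "\<dots> \<longleftrightarrow> A (?h q) p" using sym h_in that by blast
    also have "\<dots> \<longleftrightarrow> A q p" using h_twin \<open>p \<in> X\<close> by blast
    also have "\<dots> \<longleftrightarrow> A p q" using sym that by blast
    finally show ?thesis .
  qed
  then have "automorphism X A ?h"
    using h_in \<open>x \<in> X\<close> \<open>y \<in> X\<close> by (simp add: automorphism_def)
  then have "?h x = x" using assms(1,3) unfolding rigid_def by blast
  then show ?thesis by simp
qed

lemma bip_adj_sym: "bip_adj E p q \<longleftrightarrow> bip_adj E q p"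
  by (cases p; cases q) auto

lemma bip_verts_Inl [simp]: "Inl v \<in> bip_verts V W \<longleftrightarrow> v \<in> V"
  and bip_verts_Inr [simp]: "Inr w \<in> bip_verts V W \<longleftrightarrow> w \<in> W"
  by (auto simp: bip_verts_def)

lemma in_NV_iff [simp]: "w \<in> NV E v \<longleftrightarrow> (v, w) \<in> E"
  by (simp add: NV_def)

lemma rigid_bip_NV_inj:
  assumes "rigid (bip_verts V W) (bip_adj E)" "v1 \<in> V" "v2 \<in> V" "NV E v1 = NV E v2"
  shows "v1 = v2"
proof -
  have "\<forall>z\<in>bip_verts V W. bip_adj E (Inl v1) z \<longleftrightarrow> bip_adj E (Inl v2) z"
  proof
    fix z show "bip_adj E (Inl v1) z \<longleftrightarrow> bip_adj E (Inl v2) z"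
      using assms(4) by (cases z) (auto simp: set_eq_iff)
  qed
  moreover have "\<forall>p\<in>bip_verts V W. \<forall>q\<in>bip_verts V W. bip_adj E p q \<longleftrightarrow> bip_adj E q p"
    using bip_adj_sym by blast
  ultimately show ?thesis
    using rigid_twins_eq[OF assms(1), of "Inl v1" "Inl v2"] assms(2,3) by simp
qed

lemma Inl_notin_second_nbhd_Inr:
  "Inl v \<notin> second_nbhd (bip_verts V W) (bip_adj E) (Inr w)"
proof
  assume "Inl v \<in> second_nbhd (bip_verts V W) (bip_adj E) (Inr w)"
  then obtain z where "bip_adj E (Inr w) z" "bip_adj E z (Inl v)"
    unfolding second_nbhd_def by blast
  then show False by (cases z) auto
qed

text \<open>\<open>RW False w\<close> is a(w) and \<open>RW True w\<close> is b(w), so that \<open>RM v x\<close> is adjacent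
  to \<open>RW (comp x j) (ord v j)\<close> for j = 1, 2, 3.\<close>

definition RW :: "bool \<Rightarrow> 'w \<Rightarrow> ('v, 'w) rvert" where
  "RW b w = (if b then RB w else RA w)"

lemma RW_inject [simp]: "RW b w = RW b' w' \<longleftrightarrow> b = b' \<and> w = w'"
  by (auto simp: RW_def)

lemma RW_neq_RM [simp]: "RW b w \<noteq> RM v x" "RM v x \<noteq> RW b w"
  by (auto simp: RW_def)

lemma rvert_cases: obtains b w where "u = RW b w" | v x where "u = RM v x"
  by (cases u) (metis RW_def, metis RW_def, auto)

lemma R_adj_RM_RW [simp]:
  "R_adj ord (RM v x) (RW b w) \<longleftrightarrow> (\<exists>j\<in>{1,2,3}. ord v j = w \<and> comp x j = b)"
  by (cases b) (auto simp: R_adj_def RW_def)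

lemma R_adj_RW_RM [simp]:
  "R_adj ord (RW b w) (RM v x) \<longleftrightarrow> (\<exists>j\<in>{1,2,3}. ord v j = w \<and> comp x j = b)"
  by (cases b) (auto simp: R_adj_def RW_def)

lemma not_R_adj_RW_RW [simp]: "\<not> R_adj ord (RW b w) (RW b' w')"
  by (cases b; cases b') (auto simp: R_adj_def RW_def)

lemma not_R_adj_RM_RM [simp]: "\<not> R_adj ord (RM v x) (RM v' x')"
  by (simp add: R_adj_def)

lemma R_verts_RW [simp]: "RW b w \<in> R_verts V W \<longleftrightarrow> w \<in> W"
  by (cases b) (auto simp: R_verts_def RW_def)

lemma R_verts_RM [simp]: "RM v x \<in> R_verts V W \<longleftrightarrow> v \<in> V \<and> even_vec x"
  unfolding R_verts_def by blast

fun w_of :: "('v, 'w) rvert \<Rightarrow> 'w" where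
  "w_of (RA w) = w" | "w_of (RB w) = w" | "w_of (RM v x) = undefined"

lemma w_of_RW [simp]: "w_of (RW b w) = w"
  by (simp add: RW_def)

fun v_of :: "('v, 'w) rvert \<Rightarrow> 'v" where
  "v_of (RM v x) = v" | "v_of _ = undefined"

lemma filter_123:
  "{j\<in>{1,2,3::nat}. P j} =
     (if P 1 then {1} else {}) \<union> (if P 2 then {2} else {}) \<union> (if P 3 then {3} else {})"
  by auto

lemma even_vec_iff:
  "even_vec x \<longleftrightarrow> x \<in> {(False,False,False), (False,True,True), (True,False,True), (True,True,False)}"
proof -
  obtain a b c where "x = (a, b, c)" by (cases x)
  then show ?thesis
    unfolding even_vec_def filter_123 by (cases a; cases b; cases c) simp_all
qed

lemma even_vec_zero: "even_vec (False, False, False)"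
  by (simp add: even_vec_iff)

lemma comp_ext: "(\<forall>j\<in>{1,2,3}. comp x j = comp y j) \<Longrightarrow> x = y"
  by (cases x; cases y) auto

lemma even_vec_xor: "even_vec (a, b, c) \<longleftrightarrow> c = (a \<noteq> b)"
  by (cases a; cases b; cases c) (simp_all add: even_vec_iff)

lemma even_vec_exists:
  assumes "j \<in> {1,2,3}" "k \<in> {1,2,3}" "j \<noteq> k"
  shows "\<exists>x. even_vec x \<and> comp x j = p \<and> comp x k = q"
proof -
  have "j = 1 \<and> k = 2 \<or> j = 1 \<and> k = 3 \<or> j = 2 \<and> k = 3 \<or>
        k = 1 \<and> j = 2 \<or> k = 1 \<and> j = 3 \<or> k = 2 \<and> j = 3"
    using assms by auto
  then show ?thesis
  proof (elim disjE conjE)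
    assume "j = 1" "k = 2"
    then show ?thesis
      by (intro exI[of _ "(p, q, p \<noteq> q)"]) (cases p; cases q; simp add: even_vec_xor)
  next
    assume "j = 1" "k = 3"
    then show ?thesis
      by (intro exI[of _ "(p, p \<noteq> q, q)"]) (cases p; cases q; simp add: even_vec_xor)
  next
    assume "j = 2" "k = 3"
    then show ?thesis
      by (intro exI[of _ "(p \<noteq> q, p, q)"]) (cases p; cases q; simp add: even_vec_xor)
  next
    assume "k = 1" "j = 2"
    then show ?thesis
      by (intro exI[of _ "(q, p, p \<noteq> q)"]) (cases p; cases q; simp add: even_vec_xor)
  next
    assume "k = 1" "j = 3"
    then show ?thesis
      by (intro exI[of _ "(q, p \<noteq> q, p)"]) (cases p; cases q; simp add: even_vec_xor)
  next
    assume "k = 2" "j = 3"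
    then show ?thesis
      by (intro exI[of _ "(p \<noteq> q, q, p)"]) (cases p; cases q; simp add: even_vec_xor)
  qed
qed

lemma card_even_vec_comp:
  assumes "j \<in> {1,2,3}"
  shows "card {x. even_vec x \<and> comp x j = b} = 2"
proof -
  have "{x. even_vec x \<and> comp x j = b} =
          set (filter (\<lambda>x. comp x j = b)
            [(False,False,False), (False,True,True), (True,False,True), (True,True,False)])"
    by (auto simp: even_vec_iff)
  with assms show ?thesis
    by (cases b) (auto simp: distinct_card[symmetric])
qed

lemma even_card_comp_diff:
  assumes "even_vec x" "even_vec y"
  shows "even (card {j\<in>{1,2,3::nat}. comp x j \<noteq> comp y j})"
  using assms unfolding even_vec_iff filter_123 by auto

locale cubic_bipartite =
  fixes V :: "'v set" and W :: "'w set" and E :: "('v \<times> 'w) set"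
    and ord :: "'v \<Rightarrow> nat \<Rightarrow> 'w"
  assumes finite_V: "finite V" and edges_subset: "E \<subseteq> V \<times> W"
    and ord_bij: "\<forall>v\<in>V. inj_on (ord v) {1,2,3} \<and> ord v ` {1,2,3} = NV E v"
begin

abbreviation "GV \<equiv> bip_verts V W"
abbreviation "GAdj \<equiv> bip_adj E"
abbreviation "RV \<equiv> R_verts V W"
abbreviation "RAdj \<equiv> R_adj ord"

lemma NV_ord: "v \<in> V \<Longrightarrow> NV E v = ord v ` {1,2,3}"
  using ord_bij by simp

lemma ord_eq_iff:
  "v \<in> V \<Longrightarrow> j \<in> {1,2,3} \<Longrightarrow> k \<in> {1,2,3} \<Longrightarrow> ord v j = ord v k \<longleftrightarrow> j = k"
  using ord_bij by (auto dest: inj_onD)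

lemma edge_ord: "v \<in> V \<Longrightarrow> j \<in> {1,2,3} \<Longrightarrow> (v, ord v j) \<in> E"
  using NV_ord by fastforce

lemma ord_in_W: "v \<in> V \<Longrightarrow> j \<in> {1,2,3} \<Longrightarrow> ord v j \<in> W"
  using edge_ord edges_subset by blast

lemma edge_iff_ord: "v \<in> V \<Longrightarrow> (v, w) \<in> E \<longleftrightarrow> (\<exists>j\<in>{1,2,3}. ord v j = w)"
  using NV_ord[of v] by (auto simp: set_eq_iff)

lemma NV_subset_W: "NV E v \<subseteq> W"
  using edges_subset by auto

lemma R_neighbours_RM:
  assumes "v \<in> V"
  shows "{y\<in>RV. RAdj (RM v x) y} = (\<lambda>j. RW (comp x j) (ord v j)) ` {1,2,3}"
proof -
  have "y \<in> (\<lambda>j. RW (comp x j) (ord v j)) ` {1,2,3}" if "RAdj (RM v x) y" for y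
    using that by (cases y rule: rvert_cases) auto
  then show ?thesis using ord_in_W[OF assms] by auto
qed

lemma R_degree_RM:
  assumes "v \<in> V"
  shows "card {y\<in>RV. RAdj (RM v x) y} = 3"
proof -
  have "inj_on (\<lambda>j. RW (comp x j) (ord v j)) {1,2,3}"
    using ord_eq_iff[OF assms] by (auto intro: inj_onI)
  then show ?thesis by (simp add: R_neighbours_RM[OF assms] card_image)
qed

text \<open>Each neighbour \<open>v\<close> of \<open>w\<close> contributes exactly two vertices \<open>RM v x\<close> adjacent to
  \<open>RW b w\<close>, namely those with \<open>comp x j = b\<close> at the position \<open>j\<close> of \<open>w\<close>.\<close>

lemma even_R_degree_RW:
  "even (card {y\<in>RV. RAdj (RW b w) y})"
proof -
  define Vw where "Vw = {v\<in>V. (v, w) \<in> E}"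
  define B where "B v = {x. even_vec x \<and> (\<exists>j\<in>{1,2,3}. ord v j = w \<and> comp x j = b)}" for v
  have nbhd: "{y\<in>RV. RAdj (RW b w) y} = (\<lambda>(v, x). RM v x) ` (SIGMA v:Vw. B v)"
  proof -
    have "y \<in> (\<lambda>(v, x). RM v x) ` (SIGMA v:Vw. B v)" if "y \<in> RV" "RAdj (RW b w) y" for y
      using that edge_iff_ord by (cases y rule: rvert_cases) (auto simp: Vw_def B_def)
    moreover have "w \<in> W" if "v \<in> Vw" for v
      using that edges_subset by (auto simp: Vw_def)
    ultimately show ?thesis by (auto simp: B_def Vw_def)
  qed
  have "card (B v) = 2" if v: "v \<in> Vw" for v
  proof -
    obtain j where j: "j \<in> {1,2,3}" "ord v j = w"
      using v edge_iff_ord by (auto simp: Vw_def)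
    have "B v = {x. even_vec x \<and> comp x j = b}"
      using v j ord_eq_iff by (auto simp: B_def Vw_def)
    then show ?thesis using card_even_vec_comp[OF j(1)] by simp
  qed
  moreover have "finite Vw" using finite_V by (simp add: Vw_def)
  moreover have "inj_on (\<lambda>(v, x). RM v x) (SIGMA v:Vw. B v)"
    by (auto simp: inj_on_def)
  then have "card {y\<in>RV. RAdj (RW b w) y} = card (SIGMA v:Vw. B v)"
    unfolding nbhd by (rule card_image)
  ultimately have "card {y\<in>RV. RAdj (RW b w) y} = 2 * card Vw"
    by (simp add: card_SigmaI card_ge_0_finite)
  then show ?thesis by simp
qed

lemma RM_notin_second_nbhd_RW: "RM v x \<notin> second_nbhd RV RAdj (RW b w)"
proof
  assume "RM v x \<in> second_nbhd RV RAdj (RW b w)"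
  then obtain z where "RAdj (RW b w) z" "RAdj z (RM v x)"
    unfolding second_nbhd_def by blast
  then show False by (cases z rule: rvert_cases) auto
qed

text \<open>For the backward direction, the labels of a common neighbour \<open>RM v x\<close> of two
  \<open>RW\<close>-vertices can be prescribed arbitrarily, by \<open>even_vec_exists\<close>.\<close>

lemma RW_in_second_nbhd_RW_iff:
  assumes "w' \<in> W"
  shows "RW b' w' \<in> second_nbhd RV RAdj (RW b w) \<longleftrightarrow> Inr w' \<in> second_nbhd GV GAdj (Inr w)"
proof
  assume "RW b' w' \<in> second_nbhd RV RAdj (RW b w)"
  then have ne: "(b', w') \<noteq> (b, w)" and "\<exists>z\<in>RV. RAdj (RW b w) z \<and> RAdj z (RW b' w')"
    by (auto simp: second_nbhd_iff)
  then obtain z where z: "z \<in> RV" "RAdj (RW b w) z" "RAdj z (RW b' w')"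
    by blast
  then obtain v x where "z = RM v x" by (cases z rule: rvert_cases) auto
  with z have v: "v \<in> V" and "\<exists>j\<in>{1,2,3}. ord v j = w \<and> comp x j = b"
    and "\<exists>k\<in>{1,2,3}. ord v k = w' \<and> comp x k = b'"
    by simp_all
  then obtain j k where jk: "j \<in> {1,2,3}" "ord v j = w" "comp x j = b"
      "k \<in> {1,2,3}" "ord v k = w'" "comp x k = b'"
    by blast
  have "w' \<noteq> w"
  proof
    assume "w' = w"
    then have "k = j" using jk ord_eq_iff[OF v jk(4) jk(1)] by simp
    then show False using jk ne \<open>w' = w\<close> by simp
  qed
  moreover have "GAdj (Inr w) (Inl v)" "GAdj (Inl v) (Inr w')"
    using edge_ord[OF v jk(1)] edge_ord[OF v jk(4)] jk(2,5) by simp_all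
  moreover have "Inl v \<in> GV" "Inr w' \<in> GV" using v assms by simp_all
  ultimately show "Inr w' \<in> second_nbhd GV GAdj (Inr w)"
    unfolding second_nbhd_iff by (intro conjI bexI[of _ "Inl v"]) simp_all
next
  assume "Inr w' \<in> second_nbhd GV GAdj (Inr w)"
  then obtain z where z: "z \<in> GV" "GAdj (Inr w) z" "GAdj z (Inr w')" "w' \<noteq> w"
    unfolding second_nbhd_def by auto
  then obtain v where v: "z = Inl v" "v \<in> V" by (cases z) auto
  with z have "(v, w) \<in> E" "(v, w') \<in> E" by simp_all
  then obtain j k where jk: "j \<in> {1,2,3}" "ord v j = w" "k \<in> {1,2,3}" "ord v k = w'"
    using edge_iff_ord[OF v(2), of w] edge_iff_ord[OF v(2), of w'] by blast
  moreover from jk z(4) have "j \<noteq> k" by auto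
  ultimately obtain x where x: "even_vec x" "comp x j = b" "comp x k = b'"
    using even_vec_exists[of j k b b'] by blast
  have "RM v x \<in> RV" "RAdj (RW b w) (RM v x)" "RAdj (RM v x) (RW b' w')"
    using v x jk by auto
  then show "RW b' w' \<in> second_nbhd RV RAdj (RW b w)"
    unfolding second_nbhd_iff using assms z(4) by (intro conjI bexI[of _ "RM v x"]) simp_all
qed

lemma second_nbhd_RW_eq: "second_nbhd RV RAdj (RW b w) = second_nbhd RV RAdj (RW b' w)"
proof (rule set_eqI)
  fix z show "z \<in> second_nbhd RV RAdj (RW b w) \<longleftrightarrow> z \<in> second_nbhd RV RAdj (RW b' w)"
  proof (cases z rule: rvert_cases)
    case (1 c u)
    then show ?thesis
      using RW_in_second_nbhd_RW_iff by (cases "u \<in> W") (auto simp: second_nbhd_def)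
  next
    case 2
    then show ?thesis using RM_notin_second_nbhd_RW by simp
  qed
qed

lemma second_nbhd_Inr_eq_if_RW:
  assumes "second_nbhd RV RAdj (RW b1 w1) = second_nbhd RV RAdj (RW b2 w2)"
  shows "second_nbhd GV GAdj (Inr w1) = second_nbhd GV GAdj (Inr w2)"
proof (rule set_eqI)
  fix z show "z \<in> second_nbhd GV GAdj (Inr w1) \<longleftrightarrow> z \<in> second_nbhd GV GAdj (Inr w2)"
  proof (cases z)
    case Inl
    then show ?thesis by (simp add: Inl_notin_second_nbhd_Inr)
  next
    case (Inr u)
    show ?thesis
    proof (cases "u \<in> W")
      case True
      then show ?thesis
        using Inr assms RW_in_second_nbhd_RW_iff[OF True, of False b1 w1]
          RW_in_second_nbhd_RW_iff[OF True, of False b2 w2]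
        by simp
    next
      case False
      with Inr show ?thesis by (simp add: second_nbhd_def)
    qed
  qed
qed

end

locale R_automorphism = cubic_bipartite V W E ord
  for V :: "'v set" and W :: "'w set" and E :: "('v \<times> 'w) set" and ord +
  fixes f :: "('v, 'w) rvert \<Rightarrow> ('v, 'w) rvert"
  assumes finite_W: "finite W"
    and second_nbhd_inj: "\<forall>w1\<in>W. \<forall>w2\<in>W. w1 \<noteq> w2 \<longrightarrow>
      second_nbhd (bip_verts V W) (bip_adj E) (Inr w1)
        \<noteq> second_nbhd (bip_verts V W) (bip_adj E) (Inr w2)"
    and aut: "automorphism (R_verts V W) (R_adj ord) f"
begin

lemma f_RM:
  assumes "v \<in> V" "even_vec x"
  obtains v' y where "f (RM v x) = RM v' y" "v' \<in> V" "even_vec y"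
proof -
  have RM: "RM v x \<in> RV" using assms by simp
  have "odd (card {y\<in>RV. RAdj (f (RM v x)) y})"
    using automorphism_degree[OF aut RM] R_degree_RM[OF assms(1)] by simp
  then show ?thesis
    using that automorphism_in[OF aut RM] even_R_degree_RW
    by (cases "f (RM v x)" rule: rvert_cases) auto
qed

lemma f_RW:
  assumes "w \<in> W"
  obtains b' w' where "f (RW b w) = RW b' w'" "w' \<in> W"
proof -
  have RW: "RW b w \<in> RV" using assms by simp
  have "even (card {y\<in>RV. RAdj (f (RW b w)) y})"
    using automorphism_degree[OF aut RW] even_R_degree_RW by simp
  then show ?thesis
    using that automorphism_in[OF aut RW] R_degree_RM
    by (cases "f (RW b w)" rule: rvert_cases) auto
qed

definition sigma :: "'w \<Rightarrow> 'w" where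
  "sigma w = w_of (f (RW False w))"

text \<open>Automorphisms preserve second neighbourhoods and a(w), b(w) share theirs, so by
  hypothesis (4) \<open>f\<close> maps both of them to copies of the same vertex \<open>sigma w\<close>.\<close>

lemma f_RW_sigma:
  assumes "w \<in> W"
  shows "\<exists>b'. f (RW b w) = RW b' (sigma w)"
proof -
  obtain b1 w1 where 1: "f (RW b w) = RW b1 w1" "w1 \<in> W" using f_RW[OF assms] .
  obtain b0 w0 where 0: "f (RW False w) = RW b0 w0" "w0 \<in> W" using f_RW[OF assms] .
  have "second_nbhd RV RAdj (RW b1 w1) = f ` second_nbhd RV RAdj (RW b w)"
    using automorphism_second_nbhd[OF aut, of "RW b w"] assms 1(1) by simp
  also have "\<dots> = f ` second_nbhd RV RAdj (RW False w)"
    by (simp only: second_nbhd_RW_eq[of b w False])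
  also have "\<dots> = second_nbhd RV RAdj (RW b0 w0)"
    using automorphism_second_nbhd[OF aut, of "RW False w"] assms 0(1) by simp
  finally have "second_nbhd GV GAdj (Inr w1) = second_nbhd GV GAdj (Inr w0)"
    by (rule second_nbhd_Inr_eq_if_RW)
  then have "w1 = w0" using second_nbhd_inj 0(2) 1(2) by blast
  with 0 1 show ?thesis by (simp add: sigma_def)
qed

lemma sigma_in_W:
  assumes "w \<in> W"
  shows "sigma w \<in> W"
proof -
  obtain b' w' where "f (RW False w) = RW b' w'" "w' \<in> W" using f_RW[OF assms] .
  then show ?thesis by (simp add: sigma_def)
qed

lemma f_RW_False_neq_True: "w \<in> W \<Longrightarrow> f (RW False w) \<noteq> f (RW True w)"
  using automorphism_inj_iff[OF aut] by simp

lemma inj_on_sigma: "inj_on sigma W"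
proof (rule inj_onI)
  fix w1 w2 assume w: "w1 \<in> W" "w2 \<in> W" "sigma w1 = sigma w2"
  obtain b0 where b0: "f (RW False w1) = RW b0 (sigma w1)" using f_RW_sigma[OF w(1)] ..
  obtain b1 where b1: "f (RW True w1) = RW b1 (sigma w1)" using f_RW_sigma[OF w(1)] ..
  obtain b2 where b2: "f (RW False w2) = RW b2 (sigma w2)" using f_RW_sigma[OF w(2)] ..
  have "f (RW False w2) \<in> {f (RW False w1), f (RW True w1)}"
    using b0 b1 b2 w(3) f_RW_False_neq_True[OF w(1)] by (cases b0; cases b1; cases b2) auto
  then show "w1 = w2" using automorphism_inj_iff[OF aut] w by auto
qed

lemma sigma_image: "sigma ` W = W"
  using endo_inj_surj[OF finite_W _ inj_on_sigma] sigma_in_W by blast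

lemma NV_f_RM:
  assumes "v \<in> V" "even_vec x" "f (RM v x) = RM v' y" "v' \<in> V"
  shows "NV E v' = sigma ` NV E v"
proof -
  have "w_of (f (RW (comp x j) (ord v j))) = sigma (ord v j)" if "j \<in> {1,2,3}" for j
    using f_RW_sigma[OF ord_in_W[OF assms(1) that], of "comp x j"] by auto
  then have "w_of ` f ` {z\<in>RV. RAdj (RM v x) z} = sigma ` NV E v"
    by (simp add: R_neighbours_RM[OF assms(1)] NV_ord[OF assms(1)] image_image)
  moreover have "w_of ` {z\<in>RV. RAdj (f (RM v x)) z} = NV E v'"
    by (simp add: assms(3) R_neighbours_RM[OF assms(4)] NV_ord[OF assms(4)] image_image)
  ultimately show ?thesis
    using automorphism_neighbours[OF aut] assms(1,2) by simp
qed

end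

locale rigid_R_automorphism = R_automorphism V W E ord f
  for V :: "'v set" and W :: "'w set" and E ord f +
  assumes rigid: "rigid (bip_verts V W) (bip_adj E)"
begin

definition tau :: "'v \<Rightarrow> 'v" where
  "tau v = v_of (f (RM v (False, False, False)))"

lemma tau_in_V_and_NV:
  assumes "v \<in> V"
  shows "tau v \<in> V" "NV E (tau v) = sigma ` NV E v"
proof -
  obtain v' y where vy: "f (RM v (False, False, False)) = RM v' y" "v' \<in> V"
    using f_RM[OF assms even_vec_zero] .
  then show "tau v \<in> V" "NV E (tau v) = sigma ` NV E v"
    using NV_f_RM[OF assms even_vec_zero vy] by (simp_all add: tau_def)
qed

lemma inj_on_tau: "inj_on tau V"
proof (rule inj_onI)
  fix v1 v2 assume v: "v1 \<in> V" "v2 \<in> V" "tau v1 = tau v2"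
  then have "sigma ` NV E v1 = sigma ` NV E v2" by (simp flip: tau_in_V_and_NV(2))
  then have "NV E v1 = NV E v2"
    using inj_on_image_eq_iff[OF inj_on_sigma NV_subset_W NV_subset_W] by simp
  then show "v1 = v2" using rigid_bip_NV_inj[OF rigid] v by blast
qed

lemma tau_image: "tau ` V = V"
  using endo_inj_surj[OF finite_V _ inj_on_tau] tau_in_V_and_NV by blast

lemma edge_tau_sigma_iff:
  assumes "v \<in> V" "w \<in> W"
  shows "(tau v, sigma w) \<in> E \<longleftrightarrow> (v, w) \<in> E"
proof -
  have "(tau v, sigma w) \<in> E \<longleftrightarrow> sigma w \<in> NV E (tau v)" by simp
  also have "\<dots> \<longleftrightarrow> sigma w \<in> sigma ` NV E v"
    by (simp only: tau_in_V_and_NV(2)[OF assms(1)])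
  also have "\<dots> \<longleftrightarrow> w \<in> NV E v"
    using inj_on_image_mem_iff[OF inj_on_sigma assms(2) NV_subset_W] .
  finally show ?thesis by simp
qed

lemma automorphism_tau_sigma: "automorphism GV GAdj (map_sum tau sigma)"
proof -
  have "inj_on (map_sum tau sigma) GV"
    using inj_onD[OF inj_on_tau] inj_onD[OF inj_on_sigma]
    by (auto simp: bip_verts_def inj_on_def)
  moreover have "map_sum tau sigma ` GV = Inl ` tau ` V \<union> Inr ` sigma ` W"
    by (simp add: bip_verts_def image_Un image_image)
  then have "map_sum tau sigma ` GV = GV"
    unfolding tau_image sigma_image bip_verts_def .
  moreover have "GAdj (map_sum tau sigma p) (map_sum tau sigma q) \<longleftrightarrow> GAdj p q"
    if "p \<in> GV" "q \<in> GV" for p q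
    using that edge_tau_sigma_iff by (cases p; cases q) auto
  ultimately show ?thesis by (simp add: automorphism_def bij_betw_def)
qed

lemma sigma_id: "w \<in> W \<Longrightarrow> sigma w = w"
  using rigid[unfolded rigid_def, rule_format, OF automorphism_tau_sigma, of "Inr w"] by simp

definition flipped :: "'w \<Rightarrow> bool" where
  "flipped w \<longleftrightarrow> f (RW False w) = RW True w"

lemma f_RW_flip:
  assumes "w \<in> W"
  shows "f (RW b w) = RW (b \<noteq> flipped w) w"
proof -
  obtain b0 where b0: "f (RW False w) = RW b0 w"
    using f_RW_sigma[OF assms, of False] sigma_id[OF assms] by auto
  obtain b1 where b1: "f (RW True w) = RW b1 w"
    using f_RW_sigma[OF assms, of True] sigma_id[OF assms] by auto
  have "b1 \<noteq> b0" using b0 b1 f_RW_False_neq_True[OF assms] by auto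
  with b0 b1 show ?thesis by (cases b; cases b0) (auto simp: flipped_def)
qed

lemma f_RM_flip:
  assumes "v \<in> V" "even_vec x"
  obtains y where "f (RM v x) = RM v y" "even_vec y"
    "\<forall>j\<in>{1,2,3}. comp y j \<longleftrightarrow> comp x j \<noteq> flipped (ord v j)"
proof -
  obtain v' y where vy: "f (RM v x) = RM v' y" "v' \<in> V" "even_vec y"
    using f_RM[OF assms] .
  have "sigma ` NV E v = id ` NV E v"
    using sigma_id NV_subset_W[of v] by (intro image_cong) auto
  then have "sigma ` NV E v = NV E v" by simp
  then have "NV E v' = NV E v" using NV_f_RM[OF assms vy(1,2)] by simp
  then have v': "v' = v" using rigid_bip_NV_inj[OF rigid] assms(1) vy(2) by blast
  have "comp y j \<longleftrightarrow> comp x j \<noteq> flipped (ord v j)" if j: "j \<in> {1,2,3}" for j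
  proof -
    have w: "ord v j \<in> W" using ord_in_W[OF assms(1) j] .
    have "RAdj (RM v x) (RW (comp x j) (ord v j))" using j by auto
    then have "RAdj (f (RM v x)) (f (RW (comp x j) (ord v j)))"
      using automorphism_adj_iff[OF aut] assms w by simp
    then obtain k where "k \<in> {1,2,3}" "ord v k = ord v j"
        "comp y k \<longleftrightarrow> comp x j \<noteq> flipped (ord v j)"
      using vy v' f_RW_flip[OF w] by auto
    then show ?thesis using ord_eq_iff[OF assms(1) _ j] by auto
  qed
  then show ?thesis using that vy v' by blast
qed

text \<open>The image of m_0(v) is m_y(v) with \<open>y\<close> the indicator of the flipped
  neighbours of \<open>v\<close>; \<open>y\<close> being even is exactly the claim.\<close>

lemma even_card_flipped_NV:
  assumes "v \<in> V"
  shows "even (card ({w\<in>W. flipped w} \<inter> NV E v))"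
proof -
  obtain y where y: "f (RM v (False, False, False)) = RM v y" "even_vec y"
      "\<forall>j\<in>{1,2,3}. comp y j \<longleftrightarrow> comp (False, False, False) j \<noteq> flipped (ord v j)"
    using f_RM_flip[OF assms even_vec_zero] .
  have "{j\<in>{1,2,3::nat}. flipped (ord v j)} =
          {j\<in>{1,2,3::nat}. comp (False, False, False) j \<noteq> comp y j}"
    using y(3) by auto
  then have "even (card {j\<in>{1,2,3::nat}. flipped (ord v j)})"
    using even_card_comp_diff[OF even_vec_zero y(2)] by simp
  moreover have "{w\<in>W. flipped w} \<inter> NV E v = ord v ` {j\<in>{1,2,3::nat}. flipped (ord v j)}"
    using NV_ord[OF assms] ord_in_W[OF assms] by auto
  moreover have "inj_on (ord v) {j\<in>{1,2,3::nat}. flipped (ord v j)}"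
    using ord_bij assms by (auto intro: inj_on_subset)
  ultimately show ?thesis by (simp add: card_image)
qed

lemma not_flipped:
  assumes "odd_bip V W E" "w \<in> W"
  shows "\<not> flipped w"
proof
  assume "flipped w"
  with assms(2) have "{w\<in>W. flipped w} \<subseteq> W \<and> {w\<in>W. flipped w} \<noteq> {}" by blast
  then obtain v where "v \<in> V" "odd (card ({w\<in>W. flipped w} \<inter> NV E v))"
    using assms(1) unfolding odd_bip_def by blast
  with even_card_flipped_NV show False by blast
qed

lemma f_id:
  assumes "odd_bip V W E" "u \<in> RV"
  shows "f u = u"
proof (cases u rule: rvert_cases)
  case (1 b w)
  then show ?thesis using assms f_RW_flip not_flipped by simp
next
  case (2 v x)
  with assms(2) have vx: "v \<in> V" "even_vec x" by auto
  obtain y where y: "f (RM v x) = RM v y"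
      "\<forall>j\<in>{1,2,3}. comp y j \<longleftrightarrow> comp x j \<noteq> flipped (ord v j)"
    using f_RM_flip[OF vx] by blast
  then have "\<forall>j\<in>{1,2,3}. comp y j = comp x j"
    using not_flipped[OF assms(1)] ord_in_W[OF vx(1)] by simp
  then have "y = x" by (rule comp_ext)
  with 2 y(1) show ?thesis by simp
qed

end

theorem mainTheorem2:
  fixes V :: "'v set" and W :: "'w set" and E :: "('v \<times> 'w) set"
    and ord :: "'v \<Rightarrow> nat \<Rightarrow> 'w"
  assumes "finite V" and "finite W" and "E \<subseteq> V \<times> W"
    and "\<forall>v\<in>V. card (NV E v) = 3"
    and "\<forall>v\<in>V. inj_on (ord v) {1,2,3} \<and> ord v ` {1,2,3} = NV E v"
    and "odd_bip V W E"
    and "rigid (bip_verts V W) (bip_adj E)"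
    and "\<forall>w1\<in>W. \<forall>w2\<in>W. w1 \<noteq> w2 \<longrightarrow>
           second_nbhd (bip_verts V W) (bip_adj E) (Inr w1)
             \<noteq> second_nbhd (bip_verts V W) (bip_adj E) (Inr w2)"
  shows "rigid (R_verts V W) (R_adj ord)"
  unfolding rigid_def
proof (intro allI impI ballI)
  fix f u
  assume aut: "automorphism (R_verts V W) (R_adj ord) f" and u: "u \<in> R_verts V W"
  interpret rigid_R_automorphism V W E ord f
    by unfold_locales (fact assms aut)+
  show "f u = u" using f_id[OF assms(6) u] .
qed

end
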